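(* For every formula $\varphi$ of $\mathcal{L}$: (a) $\vdash_{\mathbf{DFD}^\tau}\bigcirc\varphi\leftrightarrow\varphi[v_1/\bigcirc v_1,\dots,v_N/\bigcirc v_N]$; (b) $\vdash_{\mathbf{DFD}^\tau}\varphi\leftrightarrow\mathfrak{T}(\varphi)$.
   Context: Vocabulary: finite set $V=\{v_1,\dots,v_N\}$ of basic variables and predicate symbols with arities. Terms: $v\in V$, and $\bigcirc x$ for a term $x$. Formulas of $\mathcal{L}$: $P(x_1,\dots,x_k)$, $\neg\varphi$, $\varphi\wedge\psi$, $\bigcirc\varphi$, $\mathsf{D}_X\varphi$, $D_Xy$ ($X$ a finite, possibly empty, set of terms). $\bigcirc X=\{\bigcirc x:x\in X\}$, $D_XY:=\bigwedge_{y\in Y}D_Xy$. $\varphi[v_1/\bigcirc v_1,\dots,v_N/\bigcirc v_N]$ is the formula obtained from $\varphi$ by replacing every occurrence of each basic variable $v_i$ (inside every term) by $\bigcirc v_i$. $\mathfrak{T}$ is the translation that leaves atoms $P(x_1,\dots,x_k)$ and $D_Xy$ unchanged, commutes with $\neg,\wedge$ and each $\mathsf{D}_X$, and sets $\mathfrak{T}(\bigcirc\varphi)=\mathfrak{T}(\varphi)[v_1/\bigcirc v_1,\dots,v_N/\bigcirc v_N]$. Proof system $\mathbf{DFD}^\tau$: all propositional tautologies and modus ponens; $\bigcirc(\varphi\to\psi)\to(\bigcirc\varphi\to\bigcirc\psi)$; $\bigcirc\neg\varphi\leftrightarrow\neg\bigcirc\varphi$; $\mathsf{D}_X(\varphi\to\psi)\to(\mathsf{D}_X\varphi\to\mathsf{D}_X\psi)$;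 $P(x_1,\dots,x_n)\to\mathsf{D}_{\{x_1,\dots,x_n\}}P(x_1,\dots,x_n)$; $D_Xy\to\mathsf{D}_XD_Xy$; $\mathsf{D}_X\varphi\to\varphi$; $\mathsf{D}_X\varphi\to\mathsf{D}_X\mathsf{D}_X\varphi$; $\neg\mathsf{D}_X\varphi\to\mathsf{D}_X\neg\mathsf{D}_X\varphi$; rule: from $\varphi$ infer $\mathsf{D}_X\varphi$; $D_Xx$ for $x\in X$; $D_XY\wedge D_YZ\to D_XZ$; $D_V\bigcirc v$ for $v\in V$; $D_XY\wedge\mathsf{D}_Y\varphi\to\mathsf{D}_X\varphi$; $\bigcirc P(x_1,\dots,x_k)\leftrightarrow P(\bigcirc x_1,\dots,\bigcirc x_k)$; $\bigcirc\mathsf{D}_X\varphi\leftrightarrow\mathsf{D}_{\bigcirc X}\bigcirc\varphi$; $\bigcirc D_Xy\leftrightarrow D_{\bigcirc X}\bigcirc y$; rule: from $\varphi$ infer $\bigcirc\varphi$. *)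

theory Defs
  imports Main
begin

datatype 'v trm = Var 'v | Nxt "'v trm"

text \<open>Pred P xs is P(x1,...,xk); Next phi is the modal next;
  DMod X phi is the dependence modality D_X phi; Dep X y is the dependence atom D_X y.
  Sets of terms must be finite (enforced by wf).\<close>
datatype ('v, 'p) fm =
    Pred 'p "'v trm list"
  | Neg "('v, 'p) fm"
  | Conj "('v, 'p) fm" "('v, 'p) fm"
  | Next "('v, 'p) fm"
  | DMod "'v trm set" "('v, 'p) fm"
  | Dep "'v trm set" "'v trm"

definition Imp :: "('v,'p) fm \<Rightarrow> ('v,'p) fm \<Rightarrow> ('v,'p) fm" where
  "Imp a b = Neg (Conj a (Neg b))"

definition Iff :: "('v,'p) fm \<Rightarrow> ('v,'p) fm \<Rightarrow> ('v,'p) fm" where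
  "Iff a b = Conj (Imp a b) (Imp b a)"

definition Top :: "('v,'p) fm" where
  "Top = Neg (Conj (Dep {} (Var undefined)) (Neg (Dep {} (Var undefined))))"

fun BigConj :: "('v,'p) fm list \<Rightarrow> ('v,'p) fm" where
  "BigConj [] = Top"
| "BigConj [a] = a"
| "BigConj (a # b # xs) = Conj a (BigConj (b # xs))"

text \<open>D_X Y as the conjunction of D_X y over an enumeration ys of Y.\<close>
definition DepSet :: "'v trm set \<Rightarrow> 'v trm list \<Rightarrow> ('v,'p) fm" where
  "DepSet X ys = BigConj (map (Dep X) ys)"

fun wf :: "('p \<Rightarrow> nat) \<Rightarrow> ('v,'p) fm \<Rightarrow> bool" where
  "wf ar (Pred P xs) = (length xs = ar P)"
| "wf ar (Neg a) = wf ar a"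
| "wf ar (Conj a b) = (wf ar a \<and> wf ar b)"
| "wf ar (Next a) = wf ar a"
| "wf ar (DMod X a) = (finite X \<and> wf ar a)"
| "wf ar (Dep X y) = finite X"

fun tsub :: "'v trm \<Rightarrow> 'v trm" where
  "tsub (Var v) = Nxt (Var v)"
| "tsub (Nxt t) = Nxt (tsub t)"

fun fsub :: "('v,'p) fm \<Rightarrow> ('v,'p) fm" where
  "fsub (Pred P xs) = Pred P (map tsub xs)"
| "fsub (Neg a) = Neg (fsub a)"
| "fsub (Conj a b) = Conj (fsub a) (fsub b)"
| "fsub (Next a) = Next (fsub a)"
| "fsub (DMod X a) = DMod (tsub ` X) (fsub a)"
| "fsub (Dep X y) = Dep (tsub ` X) (tsub y)"

fun Tr :: "('v,'p) fm \<Rightarrow> ('v,'p) fm" where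
  "Tr (Pred P xs) = Pred P xs"
| "Tr (Neg a) = Neg (Tr a)"
| "Tr (Conj a b) = Conj (Tr a) (Tr b)"
| "Tr (Next a) = fsub (Tr a)"
| "Tr (DMod X a) = DMod X (Tr a)"
| "Tr (Dep X y) = Dep X y"

fun peval :: "(('v,'p) fm \<Rightarrow> bool) \<Rightarrow> ('v,'p) fm \<Rightarrow> bool" where
  "peval val (Neg a) = (\<not> peval val a)"
| "peval val (Conj a b) = (peval val a \<and> peval val b)"
| "peval val a = val a"

definition tautology :: "('v,'p) fm \<Rightarrow> bool" where
  "tautology a = (\<forall>val. peval val a)"

text \<open>The basic variables V are all elements of the finite type 'v.\<close>
definition BV :: "'v trm set" where "BV = range Var"

inductive_set axioms :: "('v,'p) fm set" where
  taut: "tautology a \<Longrightarrow> a \<in> axioms"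
| nxt_K: "Imp (Next (Imp a b)) (Imp (Next a) (Next b)) \<in> axioms"
| nxt_neg: "Iff (Next (Neg a)) (Neg (Next a)) \<in> axioms"
| D_K: "Imp (DMod X (Imp a b)) (Imp (DMod X a) (DMod X b)) \<in> axioms"
| pred_D: "Imp (Pred P xs) (DMod (set xs) (Pred P xs)) \<in> axioms"
| dep_D: "Imp (Dep X y) (DMod X (Dep X y)) \<in> axioms"
| D_T: "Imp (DMod X a) a \<in> axioms"
| D_4: "Imp (DMod X a) (DMod X (DMod X a)) \<in> axioms"
| D_5: "Imp (Neg (DMod X a)) (DMod X (Neg (DMod X a))) \<in> axioms"
| dep_refl: "x \<in> X \<Longrightarrow> Dep X x \<in> axioms"
| dep_trans: "set ys = Y \<Longrightarrow> set zs = Z \<Longrightarrow>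
     Imp (Conj (DepSet X ys) (DepSet Y zs)) (DepSet X zs) \<in> axioms"
| dep_V: "Dep BV (Nxt (Var v)) \<in> axioms"
| dep_transfer: "set ys = Y \<Longrightarrow>
     Imp (Conj (DepSet X ys) (DMod Y a)) (DMod X a) \<in> axioms"
| nxt_pred: "Iff (Next (Pred P xs)) (Pred P (map Nxt xs)) \<in> axioms"
| nxt_D: "Iff (Next (DMod X a)) (DMod (Nxt ` X) (Next a)) \<in> axioms"
| nxt_dep: "Iff (Next (Dep X y)) (Dep (Nxt ` X) (Nxt y)) \<in> axioms"

inductive derivable :: "('p \<Rightarrow> nat) \<Rightarrow> ('v::finite,'p) fm \<Rightarrow> bool" for ar where
  ax: "a \<in> axioms \<Longrightarrow> wf ar a \<Longrightarrow> derivable ar a"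
| mp: "derivable ar a \<Longrightarrow> derivable ar (Imp a b) \<Longrightarrow> derivable ar b"
| nec_D: "derivable ar a \<Longrightarrow> finite X \<Longrightarrow> derivable ar (DMod X a)"
| nec_nxt: "derivable ar a \<Longrightarrow> derivable ar (Next a)"

end

theory Submission
  imports Defs
begin

text \<open>Since the substitution v/Next v acts on every term t as Nxt t, part (a) says that Next
  commutes with every connective. The axioms nxt_neg, nxt_pred, nxt_D and nxt_dep provide this
  for Neg, atoms and D_X, and for Conj it follows from the K axiom and necessitation of Next;
  induction on the formula, using that derivable equivalence is a congruence for all
  connectives, gives (a). Part (b) is a second induction in which the Next case is (a) applied
  to the translated subformula.\<close>

lemma tsub_eq_Nxt: "tsub = Nxt"
proof
  show "tsub t = Nxt t" for t
    by (induction t) auto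
qed

lemma wf_Imp [simp]: "wf ar (Imp a b) = (wf ar a \<and> wf ar b)"
  by (simp add: Imp_def)

lemma wf_Iff [simp]: "wf ar (Iff a b) = (wf ar a \<and> wf ar b)"
  by (auto simp: Iff_def)

lemma wf_fsub: "wf ar a \<Longrightarrow> wf ar (fsub a)"
  by (induction a) auto

lemma wf_Tr: "wf ar a \<Longrightarrow> wf ar (Tr a)"
  by (induction a) (auto simp: wf_fsub)

lemma derivable_wf: "derivable ar a \<Longrightarrow> wf ar a"
  by (induction rule: derivable.induct) auto

lemma derivable_tautology: "tautology a \<Longrightarrow> wf ar a \<Longrightarrow> derivable ar a"
  by (blast intro: derivable.ax axioms.taut)

lemma derivable_taut_consequence:
  assumes "derivable ar a" and "tautology (Imp a b)" and "wf ar b"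
  shows "derivable ar b"
proof -
  have "derivable ar (Imp a b)"
    using assms derivable_wf[OF assms(1)] by (intro derivable_tautology) auto
  then show ?thesis
    using assms(1) by (rule derivable.mp[rotated])
qed

lemma derivable_taut_consequence2:
  assumes "derivable ar a" and "derivable ar b" and "tautology (Imp a (Imp b c))" and "wf ar c"
  shows "derivable ar c"
proof -
  have "derivable ar (Imp a (Imp b c))"
    using assms derivable_wf[OF assms(1)] derivable_wf[OF assms(2)]
    by (intro derivable_tautology) auto
  then show ?thesis
    using assms(1,2) by (blast intro: derivable.mp)
qed

lemma derivable_Iff_refl: "wf ar a \<Longrightarrow> derivable ar (Iff a a)"
  by (rule derivable_tautology) (auto simp: tautology_def Iff_def Imp_def)

lemma derivable_IffD1: "derivable ar (Iff a b) \<Longrightarrow> derivable ar (Imp a b)"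
  by (frule derivable_wf, erule derivable_taut_consequence)
    (auto simp: tautology_def Iff_def Imp_def)

lemma derivable_IffD2: "derivable ar (Iff a b) \<Longrightarrow> derivable ar (Imp b a)"
  by (frule derivable_wf, erule derivable_taut_consequence)
    (auto simp: tautology_def Iff_def Imp_def)

lemma derivable_IffI:
  "derivable ar (Imp a b) \<Longrightarrow> derivable ar (Imp b a) \<Longrightarrow> derivable ar (Iff a b)"
  by (frule derivable_wf, erule derivable_taut_consequence2, assumption)
    (auto simp: tautology_def Iff_def Imp_def)

lemma derivable_Iff_trans:
  "derivable ar (Iff a b) \<Longrightarrow> derivable ar (Iff b c) \<Longrightarrow> derivable ar (Iff a c)"
  by (frule derivable_wf, frule derivable_wf[of _ "Iff b c"],
      erule derivable_taut_consequence2, assumption)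
    (auto simp: tautology_def Iff_def Imp_def)

lemma derivable_Iff_Neg: "derivable ar (Iff a b) \<Longrightarrow> derivable ar (Iff (Neg a) (Neg b))"
  by (frule derivable_wf, erule derivable_taut_consequence)
    (auto simp: tautology_def Iff_def Imp_def)

lemma derivable_Iff_Conj:
  "derivable ar (Iff a b) \<Longrightarrow> derivable ar (Iff c d) \<Longrightarrow>
   derivable ar (Iff (Conj a c) (Conj b d))"
  by (frule derivable_wf, frule derivable_wf[of _ "Iff c d"],
      erule derivable_taut_consequence2, assumption)
    (auto simp: tautology_def Iff_def Imp_def)

lemma derivable_Next_mono:
  assumes "derivable ar (Imp a b)"
  shows "derivable ar (Imp (Next a) (Next b))"
proof -
  have "derivable ar (Imp (Next (Imp a b)) (Imp (Next a) (Next b)))"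
    using derivable_wf[OF assms] by (intro derivable.ax axioms.nxt_K) auto
  then show ?thesis
    using assms by (blast intro: derivable.mp derivable.nec_nxt)
qed

lemma derivable_Next_cong: "derivable ar (Iff a b) \<Longrightarrow> derivable ar (Iff (Next a) (Next b))"
  by (blast intro: derivable_IffI derivable_Next_mono derivable_IffD1 derivable_IffD2)

lemma derivable_DMod_mono:
  assumes "finite X" and "derivable ar (Imp a b)"
  shows "derivable ar (Imp (DMod X a) (DMod X b))"
proof -
  have "derivable ar (Imp (DMod X (Imp a b)) (Imp (DMod X a) (DMod X b)))"
    using assms derivable_wf[OF assms(2)] by (intro derivable.ax axioms.D_K) auto
  then show ?thesis
    using assms by (blast intro: derivable.mp derivable.nec_D)
qed

lemma derivable_DMod_cong:
  "finite X \<Longrightarrow> derivable ar (Iff a b) \<Longrightarrow> derivable ar (Iff (DMod X a) (DMod X b))"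
  by (blast intro: derivable_IffI derivable_DMod_mono derivable_IffD1 derivable_IffD2)

lemma derivable_Next_Conj:
  assumes "wf ar a" and "wf ar b"
  shows "derivable ar (Iff (Next (Conj a b)) (Conj (Next a) (Next b)))"
proof (rule derivable_IffI)
  have "derivable ar (Imp (Conj a b) a)" and "derivable ar (Imp (Conj a b) b)"
    using assms by (auto intro!: derivable_tautology simp: tautology_def Imp_def)
  then have "derivable ar (Imp (Next (Conj a b)) (Next a))"
    and "derivable ar (Imp (Next (Conj a b)) (Next b))"
    by (auto intro: derivable_Next_mono)
  then show "derivable ar (Imp (Next (Conj a b)) (Conj (Next a) (Next b)))"
    by (rule derivable_taut_consequence2) (use assms in \<open>auto simp: tautology_def Imp_def\<close>)
next
  have "derivable ar (Imp a (Imp b (Conj a b)))"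
    using assms by (auto intro!: derivable_tautology simp: tautology_def Imp_def)
  then have "derivable ar (Imp (Next a) (Next (Imp b (Conj a b))))"
    by (rule derivable_Next_mono)
  moreover have "derivable ar (Imp (Next (Imp b (Conj a b))) (Imp (Next b) (Next (Conj a b))))"
    using assms by (intro derivable.ax axioms.nxt_K) auto
  ultimately show "derivable ar (Imp (Conj (Next a) (Next b)) (Next (Conj a b)))"
    by (rule derivable_taut_consequence2) (use assms in \<open>auto simp: tautology_def Imp_def\<close>)
qed

lemma derivable_Next_fsub: "wf ar \<phi> \<Longrightarrow> derivable ar (Iff (Next \<phi>) (fsub \<phi>))"
proof (induction \<phi>)
  case (Pred P xs)
  then show ?case
    by (simp add: tsub_eq_Nxt) (intro derivable.ax axioms.nxt_pred, simp)
next
  case (Neg a)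
  have "derivable ar (Iff (Next (Neg a)) (Neg (Next a)))"
    using Neg.prems by (intro derivable.ax axioms.nxt_neg) simp
  then show ?case
    using Neg by (auto intro: derivable_Iff_trans derivable_Iff_Neg)
next
  case (Conj a b)
  then show ?case
    using derivable_Next_Conj[of ar a b] by (auto intro: derivable_Iff_trans derivable_Iff_Conj)
next
  case (Next a)
  then show ?case by (auto intro: derivable_Next_cong)
next
  case (DMod X a)
  have "derivable ar (Iff (Next (DMod X a)) (DMod (Nxt ` X) (Next a)))"
    using DMod.prems by (intro derivable.ax axioms.nxt_D) simp
  moreover have "derivable ar (Iff (DMod (Nxt ` X) (Next a)) (DMod (Nxt ` X) (fsub a)))"
    using DMod by (intro derivable_DMod_cong) auto
  ultimately show ?case
    by (auto intro: derivable_Iff_trans simp: tsub_eq_Nxt)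
next
  case (Dep X y)
  then show ?case
    by (simp add: tsub_eq_Nxt) (intro derivable.ax axioms.nxt_dep, simp)
qed

lemma derivable_Iff_Tr: "wf ar \<phi> \<Longrightarrow> derivable ar (Iff \<phi> (Tr \<phi>))"
proof (induction \<phi>)
  case (Next a)
  then have "derivable ar (Iff (Next a) (Next (Tr a)))"
    by (auto intro: derivable_Next_cong)
  moreover have "derivable ar (Iff (Next (Tr a)) (fsub (Tr a)))"
    using Next.prems by (intro derivable_Next_fsub wf_Tr) simp
  ultimately show ?case by (auto intro: derivable_Iff_trans)
qed (auto intro: derivable_Iff_refl derivable_Iff_Neg derivable_Iff_Conj derivable_DMod_cong)

theorem fact5p4:
  fixes ar :: "'p \<Rightarrow> nat" and \<phi> :: "('v::finite, 'p) fm"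
  assumes "wf ar \<phi>"
  shows "derivable ar (Iff (Next \<phi>) (fsub \<phi>)) \<and> derivable ar (Iff \<phi> (Tr \<phi>))"
  using derivable_Next_fsub[OF assms] derivable_Iff_Tr[OF assms] by simp

end
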